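(* Let $A,C>0$ be given constants and let $r>0$ be a fixed constant. For $N$ sufficiently large the following holds: for any $x\in I_W$ there does not exist a real number $D$ with $r\le D\le N^{A}$ such that \[\sum_{i=1}^n\|D\,b_i(x)\|_{\mathbb R/\mathbb Z}^2\le C\log N.\]
   Context: Let $0<c_1<c_2$ be constants, $n$ a large integer and $M$ a large parameter (possibly growing with $n$) with $I_W:=[c_1M,c_2M]\subset[0,\sqrt n-M]$; set $N:=M$. For $x>0$ and $1\le i\le n$ let $b_i(x)=\sqrt N\,e^{-x^2/2}\,x^i/\sqrt{i!}$. For $t\in\mathbb R$, $\|t\|_{\mathbb R/\mathbb Z}$ denotes the distance from $t$ to the nearest integer. *)

theory Defs
  imports Complex_Main
begin

definition dist_Z :: "real \<Rightarrow> real" where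
  "dist_Z t = \<bar>t - of_int (round t)\<bar>"

definition bfun :: "real \<Rightarrow> nat \<Rightarrow> real \<Rightarrow> real" where
  "bfun N i x = sqrt N * exp (- (x^2) / 2) * x ^ i / sqrt (fact i)"

end

theory Submission
  imports Defs "HOL-Real_Asymp.Real_Asymp"
begin

(* Put u_i = D b_i(x) and recall N = M. Then u_i^2 = D^2 M w_i, where w is the Poisson
   distribution with mean x^2 ~ M^2, so u is unimodal with its peak at i ~ x^2.
   If the peak value is at most 1/2, every u_i is its own distance to the integers, and the sum is
   D^2 M times the Poisson mass of {1..n}, i.e. at least r^2 M / 2, far more than C log M.
   Otherwise, since D <= M^A while the Poisson tail M^(3/2) beyond the mean is exp(-Omega(M)),
   u falls below 1/4 within M^(3/2) steps after the peak; along the way each ratio u_(i+1)/u_i is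
   at least 1 - O(M^(-1/2)), so u spends more than 16 C log M consecutive indices in (1/4, 1/2],
   each contributing at least 1/16 to the sum. *)

definition poisson_weight :: "real \<Rightarrow> nat \<Rightarrow> real" where
  "poisson_weight l i = exp (- l) * l ^ i / fact i"

lemma poisson_weight_nonneg: "0 \<le> l \<Longrightarrow> 0 \<le> poisson_weight l i"
  by (simp add: poisson_weight_def)

lemma poisson_weight_sums: "poisson_weight l sums 1"
proof -
  have "(\<lambda>i. exp (- l) * (l ^ i / fact i)) sums (exp (- l) * exp l)"
    using exp_converges[of l] by (intro sums_mult) (simp add: divide_inverse mult.commute)
  moreover have "poisson_weight l = (\<lambda>i. exp (- l) * (l ^ i / fact i))"
    by (simp add: fun_eq_iff poisson_weight_def)
  ultimately show ?thesis by (simp add: exp_minus_inverse mult.commute)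
qed

lemma exp_partial_sum_le: "0 \<le> (y::real) \<Longrightarrow> (\<Sum>i<K. y ^ i / fact i) \<le> exp y"
  using exp_converges[of y] sum_le_suminf[of "\<lambda>i. y ^ i / fact i" "{..<K}"]
  by (simp add: sums_iff divide_inverse mult.commute)

(* Chernoff: weight the i-th term by t^(i-m) with t = 1 + T/(2l), then use ln (1 + s) >= s - s^2. *)
lemma poisson_upper_tail_le:
  fixes l T :: real
  assumes l: "0 < l" and T: "0 \<le> T" "T \<le> l / 2" and m: "l + T \<le> real m"
  shows "(\<Sum>i\<in>{m..K}. poisson_weight l i) \<le> exp (- (T\<^sup>2 / (8 * l)))"
proof -
  define s where "s = T / (2 * l)"
  define t where "t = 1 + s"
  have s: "0 \<le> s" "s \<le> 1" using l T by (auto simp: s_def field_simps)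
  then have t: "1 \<le> t" by (simp add: t_def)
  have "(\<Sum>i\<in>{m..K}. l ^ i / fact i) \<le> (\<Sum>i\<in>{m..K}. (l * t) ^ i / fact i) / t ^ m"
    unfolding sum_divide_distrib
  proof (rule sum_mono)
    fix i assume "i \<in> {m..K}"
    then have "t ^ m \<le> t ^ i" using t by (simp add: power_increasing)
    then show "l ^ i / fact i \<le> (l * t) ^ i / fact i / t ^ m"
      using t l by (simp add: field_simps power_mult_distrib mult_left_mono)
  qed
  also have "\<dots> \<le> (\<Sum>i<Suc K. (l * t) ^ i / fact i) / t ^ m"
    using l t by (intro divide_right_mono sum_mono2) auto
  also have "\<dots> \<le> exp (l * t) / t ^ m"
    using exp_partial_sum_le[of "l * t" "Suc K"] l t by (simp add: divide_right_mono)
  also have "\<dots> \<le> exp (l * t) / exp ((l + T) * (s - s\<^sup>2))"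
  proof -
    have "(l + T) * (s - s\<^sup>2) \<le> (l + T) * ln t"
      using ln_one_plus_pos_lower_bound[OF s] l T unfolding t_def by (intro mult_left_mono) auto
    also have "\<dots> \<le> real m * ln t" using m t by (intro mult_right_mono) auto
    also have "\<dots> = ln (t ^ m)" using t by (simp add: ln_realpow)
    finally have "exp ((l + T) * (s - s\<^sup>2)) \<le> t ^ m"
      using t by (simp add: ln_ge_iff)
    then show ?thesis by (intro divide_left_mono) (use t in auto)
  qed
  finally have tail: "exp (- l) * (\<Sum>i\<in>{m..K}. l ^ i / fact i)
      \<le> exp (- l + l * t - (l + T) * (s - s\<^sup>2))"
    by (simp add: exp_diff exp_add exp_minus field_simps)
  have "- l + l * t - (l + T) * (s - s\<^sup>2) = - (T\<^sup>2 / (4 * l)) + T ^ 3 / (4 * l\<^sup>2)"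
    using l unfolding t_def s_def by (simp add: field_simps power2_eq_square power3_eq_cube)
  also have "\<dots> \<le> - (T\<^sup>2 / (8 * l))"
  proof -
    have "T\<^sup>2 * (T * (8 * l)) \<le> T\<^sup>2 * (4 * l\<^sup>2)"
      using T l by (intro mult_left_mono) (auto simp: power2_eq_square)
    then show ?thesis using l by (simp add: field_simps power2_eq_square power3_eq_cube)
  qed
  finally show ?thesis
    using tail by (simp add: poisson_weight_def sum_distrib_left order_trans)
qed

lemma poisson_mass_ge:
  fixes l T :: real
  assumes l: "0 < l" and T: "0 \<le> T" "T \<le> l / 2" and n: "l + T \<le> real (Suc n)"
  shows "1 - exp (- l) - exp (- (T\<^sup>2 / (8 * l))) \<le> (\<Sum>i = 1..n. poisson_weight l i)"
proof -
  have "(\<Sum>i<K. poisson_weight l i)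
      \<le> exp (- l) + (\<Sum>i = 1..n. poisson_weight l i) + exp (- (T\<^sup>2 / (8 * l)))"
    if "Suc n \<le> K" for K
  proof -
    have "{..<K} = insert 0 ({1..n} \<union> {Suc n..K - 1})" using that by auto
    then have "(\<Sum>i<K. poisson_weight l i) = poisson_weight l 0
        + (\<Sum>i = 1..n. poisson_weight l i) + (\<Sum>i\<in>{Suc n..K - 1}. poisson_weight l i)"
      by (simp add: sum.union_disjoint)
    then show ?thesis
      using poisson_upper_tail_le[OF l T n, of "K - 1"] by (simp add: poisson_weight_def)
  qed
  then have "1 \<le> exp (- l) + (\<Sum>i = 1..n. poisson_weight l i) + exp (- (T\<^sup>2 / (8 * l)))"
    using LIMSEQ_le_const2[OF poisson_weight_sums[unfolded sums_def]] by blast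
  then show ?thesis by simp
qed

lemma dist_Z_eq_self: "0 \<le> t \<Longrightarrow> t \<le> 1 / 2 \<Longrightarrow> dist_Z t = t"
proof -
  assume t: "0 \<le> t" "t \<le> 1 / 2"
  show ?thesis
  proof (cases "t = 1 / 2")
    case True
    then have "round t = 1" by (intro round_unique) auto
    with True show ?thesis by (simp add: dist_Z_def)
  next
    case False
    with t have "round t = 0" by (intro round_unique) auto
    with t show ?thesis by (simp add: dist_Z_def)
  qed
qed

lemma sum_dist_Z_sq_ge_run:
  fixes u :: "nat \<Rightarrow> real"
  assumes run: "\<And>k. j \<le> k \<Longrightarrow> k < j + L \<Longrightarrow> 1 / 4 < u k \<and> u k \<le> 1 / 2"
    and sub: "{j..<j + L} \<subseteq> {1..n}"
  shows "real L / 16 \<le> (\<Sum>i = 1..n. (dist_Z (u i))\<^sup>2)"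
proof -
  have "real L / 16 = (\<Sum>i\<in>{j..<j + L}. (1 / 4)\<^sup>2)" by (simp add: power2_eq_square)
  also have "\<dots> \<le> (\<Sum>i\<in>{j..<j + L}. (dist_Z (u i))\<^sup>2)"
    using run dist_Z_eq_self by (intro sum_mono power_mono) fastforce+
  also have "\<dots> \<le> (\<Sum>i = 1..n. (dist_Z (u i))\<^sup>2)"
    using sub by (intro sum_mono2) auto
  finally show ?thesis .
qed

lemma bfun_Suc: "bfun N (Suc i) x = bfun N i x * (x / sqrt (Suc i))"
  by (simp add: bfun_def real_sqrt_mult field_simps del: of_nat_Suc)

lemma bfun_nonneg: "0 \<le> N \<Longrightarrow> 0 \<le> x \<Longrightarrow> 0 \<le> bfun N i x"
  by (simp add: bfun_def)

lemma bfun_square: "0 \<le> N \<Longrightarrow> (bfun N i x)\<^sup>2 = N * poisson_weight (x\<^sup>2) i"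
  by (simp add: bfun_def poisson_weight_def power_mult_distrib power_divide
      power_mult[symmetric] mult.commute[of i] exp_double[symmetric] exp_add[symmetric])

lemma bfun_le_peak:
  assumes N: "0 \<le> N" and x: "0 < x" and p: "real p < x\<^sup>2" "x\<^sup>2 \<le> real (Suc p)"
  shows "bfun N i x \<le> bfun N p x"
proof -
  have ratio_ge: "1 \<le> x / sqrt (Suc k)" if "k < p" for k
  proof -
    have "sqrt (Suc k) \<le> sqrt (x\<^sup>2)" using that p by (intro real_sqrt_le_mono) linarith
    then show ?thesis using x by simp
  qed
  have ratio_le: "x / sqrt (Suc k) \<le> 1" if "p \<le> k" for k
  proof -
    have "sqrt (x\<^sup>2) \<le> sqrt (Suc k)" using that p by (intro real_sqrt_le_mono) linarith
    then show ?thesis using x by simp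
  qed
  show ?thesis
  proof (cases "i \<le> p")
    case True
    show ?thesis
    proof (rule lift_Suc_mono_le_ivl[where f = "\<lambda>k. bfun N k x" and N = "{..<p}"])
      fix k :: nat assume "k \<in> {..<p}"
      then have "bfun N k x * 1 \<le> bfun N k x * (x / sqrt (Suc k))"
        using ratio_ge[of k] bfun_nonneg[OF N, of x k] x by (intro mult_left_mono) auto
      then show "bfun N k x \<le> bfun N (Suc k) x" by (simp only: bfun_Suc mult_1_right)
    qed (use True in auto)
  next
    case False
    show ?thesis
    proof (rule lift_Suc_antimono_le_ivl[where f = "\<lambda>k. bfun N k x" and N = "{p..}"])
      fix k :: nat assume "k \<in> {p..}"
      then have "bfun N k x * (x / sqrt (Suc k)) \<le> bfun N k x * 1"
        using ratio_le[of k] bfun_nonneg[OF N, of x k] x by (intro mult_left_mono) auto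
      then show "bfun N (Suc k) x \<le> bfun N k x" by (simp only: bfun_Suc mult_1_right)
    qed (use False in auto)
  qed
qed

lemma slowly_decreasing_run_in_band:
  fixes u :: "nat \<Rightarrow> real"
  assumes "p < q" and up: "1 / 2 < u p" and uq: "u q \<le> 1 / 4"
    and \<rho>: "0 < \<rho>" "\<rho> \<le> 1" "1 / 2 \<le> \<rho> ^ L"
    and decr: "\<And>i. p \<le> i \<Longrightarrow> i < q \<Longrightarrow> \<rho> * u i \<le> u (Suc i) \<and> u (Suc i) \<le> u i"
  shows "\<exists>j>p. j + L \<le> q \<and> (\<forall>k. j \<le> k \<longrightarrow> k < j + L \<longrightarrow> 1 / 4 < u k \<and> u k \<le> 1 / 2)"
proof -
  define j where "j = (LEAST i. p \<le> i \<and> u i \<le> 1 / 2)"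
  have "p \<le> j" "u j \<le> 1 / 2"
    unfolding j_def using LeastI[of "\<lambda>i. p \<le> i \<and> u i \<le> 1 / 2" q] \<open>p < q\<close> uq by auto
  have "j \<le> q"
    unfolding j_def using Least_le[of "\<lambda>i. p \<le> i \<and> u i \<le> 1 / 2" q] \<open>p < q\<close> uq by auto
  have "p < j" using \<open>p \<le> j\<close> \<open>u j \<le> 1 / 2\<close> up by (cases "p = j") auto
  then obtain i where i: "j = Suc i" "p \<le> i" by (cases j) auto
  have "1 / 2 < u i"
    using not_less_Least[of i "\<lambda>i. p \<le> i \<and> u i \<le> 1 / 2"] i unfolding j_def[symmetric] by auto
  then have "\<rho> * (1 / 2) < \<rho> * u i" using \<rho> by (intro mult_strict_left_mono) auto
  moreover have "\<rho> * u i \<le> u j" using decr[of i] i \<open>j \<le> q\<close> by simp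
  ultimately have uj: "\<rho> / 2 < u j" by simp
  have decay: "\<rho> ^ (k - j) * u j \<le> u k \<and> u k \<le> u j" if "j \<le> k" "k \<le> q" for k
    using that
  proof (induction k rule: dec_induct)
    case (step m)
    have IH: "\<rho> ^ (m - j) * u j \<le> u m" "u m \<le> u j" using step.IH step.prems by auto
    have st: "\<rho> * u m \<le> u (Suc m)" "u (Suc m) \<le> u m"
      using decr[of m] step.hyps step.prems \<open>p < j\<close> by auto
    have "\<rho> ^ (Suc m - j) * u j = \<rho> * (\<rho> ^ (m - j) * u j)"
      using step.hyps(1) by (simp add: Suc_diff_le)
    also have "\<dots> \<le> \<rho> * u m" using IH \<rho> by (intro mult_left_mono) auto
    finally show ?case using st IH by linarith
  qed simp
  have band: "1 / 4 < u k \<and> u k \<le> 1 / 2" if "j \<le> k" "k \<le> q" "k < j + L" for k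
  proof
    have "1 / 4 \<le> \<rho> ^ L / 2" using \<rho> by simp
    also have "\<dots> \<le> \<rho> ^ Suc (k - j) / 2"
      using \<rho> that by (intro divide_right_mono power_decreasing) auto
    also have "\<dots> = \<rho> ^ (k - j) * (\<rho> / 2)" by simp
    also have "\<dots> < \<rho> ^ (k - j) * u j" using uj \<rho> by (intro mult_strict_left_mono) auto
    also have "\<dots> \<le> u k" using decay[OF that(1,2)] by simp
    finally show "1 / 4 < u k" .
    show "u k \<le> 1 / 2" using decay[OF that(1,2)] \<open>u j \<le> 1 / 2\<close> by simp
  qed
  have "j + L \<le> q"
  proof (rule ccontr)
    assume "\<not> j + L \<le> q"
    then have "1 / 4 < u q" using band[of q] \<open>j \<le> q\<close> by simp
    with uq show False by simp
  qed
  then show ?thesis using band \<open>p < j\<close> by (intro exI[of _ j]) simp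
qed

(* These hold eventually because the distance M^(3/2) between the peak and the cutoff index lies
   between M sqrt (log M) and M^2 / log M. *)
definition admissible_scale :: "real \<Rightarrow> real \<Rightarrow> real \<Rightarrow> real \<Rightarrow> real \<Rightarrow> real \<Rightarrow> bool" where
  "admissible_scale c1 c2 A C r M \<longleftrightarrow>
     1 \<le> M \<and> 2 \<le> M powr (3/2) \<and> M powr (3/2) + 1 \<le> M\<^sup>2 \<and> M powr (3/2) \<le> c1\<^sup>2 * M\<^sup>2 / 2 \<and>
     M powr (2 * A) * M * exp (- (M / (32 * c2\<^sup>2))) \<le> 1 / 16 \<and>
     exp (- (c1\<^sup>2 * M\<^sup>2)) + exp (- (M / (32 * c2\<^sup>2))) \<le> 1 / 2 \<and>
     (M powr (3/2) + 1) * (16 * C * ln M + 2) \<le> ln 4 * c1\<^sup>2 * M\<^sup>2 \<and>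
     C * ln M < r\<^sup>2 * M / 2"

lemma eventually_admissible_scale:
  fixes c1 c2 A C r :: real
  assumes "0 < c1" "0 < c2" "0 < r"
  shows "eventually (admissible_scale c1 c2 A C r) at_top"
  unfolding admissible_scale_def using assms by (intro eventually_conj; real_asymp)

locale large_window =
  fixes c1 c2 A C r M x D :: real and n :: nat
  assumes c1_pos: "0 < c1" and C_pos: "0 < C" and r_pos: "0 < r"
    and admissible: "admissible_scale c1 c2 A C r M"
    and x_lower: "c1 * M \<le> x" and x_upper: "x \<le> c2 * M"
    and window: "c2 * M \<le> sqrt (real n) - M"
    and D_lower: "r \<le> D" and D_upper: "D \<le> M powr A"
begin

lemma M_ge_1: "1 \<le> M"
  and M32_ge_2: "2 \<le> M powr (3/2)"
  and M32_plus_1_le_M_sq: "M powr (3/2) + 1 \<le> M\<^sup>2"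
  and M32_le_half_c1_M_sq: "M powr (3/2) \<le> c1\<^sup>2 * M\<^sup>2 / 2"
  and far_weight_bound: "M powr (2 * A) * M * exp (- (M / (32 * c2\<^sup>2))) \<le> 1 / 16"
  and mass_defect_bound: "exp (- (c1\<^sup>2 * M\<^sup>2)) + exp (- (M / (32 * c2\<^sup>2))) \<le> 1 / 2"
  and run_length_ratio_bound: "(M powr (3/2) + 1) * (16 * C * ln M + 2) \<le> ln 4 * c1\<^sup>2 * M\<^sup>2"
  and log_less_mass: "C * ln M < r\<^sup>2 * M / 2"
  using admissible by (simp_all add: admissible_scale_def)

lemma M_pos: "0 < M"
  using M_ge_1 by simp

lemma x_pos: "0 < x"
  using mult_pos_pos[OF c1_pos M_pos] x_lower by linarith

lemma D_pos: "0 < D"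
  using r_pos D_lower by simp

lemma x_sq_pos: "0 < x\<^sup>2"
  using x_pos by simp

lemma x_sq_lower: "c1\<^sup>2 * M\<^sup>2 \<le> x\<^sup>2"
  using x_lower c1_pos M_pos by (metis power_mono power_mult_distrib mult_nonneg_nonneg less_imp_le)

lemma x_sq_upper: "x\<^sup>2 \<le> c2\<^sup>2 * M\<^sup>2"
  using x_upper x_pos by (metis power_mono power_mult_distrib less_imp_le)

lemma x_sq_room: "x\<^sup>2 + M\<^sup>2 \<le> real n"
proof -
  have "x + M \<le> sqrt (real n)" using x_upper window by simp
  then have "(x + M)\<^sup>2 \<le> (sqrt (real n))\<^sup>2"
    using x_pos M_pos by (intro power_mono) auto
  then have "(x + M)\<^sup>2 \<le> real n" by simp
  moreover have "0 \<le> 2 * x * M" using x_pos M_pos by simp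
  ultimately show ?thesis unfolding power2_sum by linarith
qed

definition peak :: nat where "peak = nat (\<lceil>x\<^sup>2\<rceil> - 1)"

lemma peak_bounds: "real peak < x\<^sup>2" "x\<^sup>2 \<le> real (Suc peak)"
  using x_pos ceiling_correct[of "x\<^sup>2"] by (auto simp: peak_def of_nat_nat)

definition gap :: nat where "gap = nat \<lceil>M powr (3/2)\<rceil>"

lemma gap_bounds: "M powr (3/2) \<le> real gap" "real gap \<le> M powr (3/2) + 1"
  using ceiling_correct[of "M powr (3/2)"] M_pos by (auto simp: gap_def of_nat_nat)

definition far :: nat where "far = peak + gap"

lemma peak_less_far: "peak < far"
  using gap_bounds M32_ge_2 by (simp add: far_def)

lemma far_le_n: "far \<le> n"
  using peak_bounds gap_bounds M32_plus_1_le_M_sq x_sq_room unfolding far_def by linarith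

lemma tail_deviation:
  defines "T \<equiv> real gap - 1"
  shows "0 \<le> T" "T \<le> x\<^sup>2 / 2" "x\<^sup>2 + T \<le> real far"
    and "exp (- (T\<^sup>2 / (8 * x\<^sup>2))) \<le> exp (- (M / (32 * c2\<^sup>2)))"
proof -
  show "0 \<le> T" "T \<le> x\<^sup>2 / 2" "x\<^sup>2 + T \<le> real far"
    using gap_bounds M32_ge_2 M32_le_half_c1_M_sq x_sq_lower peak_bounds unfolding T_def far_def by simp_all
  have "M powr (3/2) / 2 \<le> T" using gap_bounds M32_ge_2 unfolding T_def by simp
  then have "(M powr (3/2) / 2)\<^sup>2 \<le> T\<^sup>2" using M_pos by (intro power_mono) auto
  moreover have "(M powr (3/2) / 2)\<^sup>2 = M ^ 3 / 4"
  proof -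
    have "(M powr (3/2))\<^sup>2 = M powr 3" by (simp add: power2_eq_square flip: powr_add)
    then show ?thesis using M_pos by (simp add: power_divide powr_realpow)
  qed
  ultimately have "(M ^ 3 / 4) / (8 * (c2\<^sup>2 * M\<^sup>2)) \<le> T\<^sup>2 / (8 * x\<^sup>2)"
    using x_pos x_sq_upper M_pos by (intro frac_le) auto
  moreover have "(M ^ 3 / 4) / (8 * (c2\<^sup>2 * M\<^sup>2)) = M / (32 * c2\<^sup>2)"
    using M_pos by (simp add: field_simps power2_eq_square power3_eq_cube)
  ultimately show "exp (- (T\<^sup>2 / (8 * x\<^sup>2))) \<le> exp (- (M / (32 * c2\<^sup>2)))" by simp
qed

definition u :: "nat \<Rightarrow> real" where "u i = D * bfun M i x"

lemma u_nonneg: "0 \<le> u i"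
  using D_pos M_pos x_pos bfun_nonneg[of M x i] by (simp add: u_def)

lemma u_le_peak: "u i \<le> u peak"
  using bfun_le_peak[of M x peak i] M_pos x_pos peak_bounds D_pos by (simp add: u_def)

lemma u_square: "(u i)\<^sup>2 = D\<^sup>2 * M * poisson_weight (x\<^sup>2) i"
  using bfun_square[of M i x] M_pos by (simp add: u_def power_mult_distrib)

lemma u_far_le: "u far \<le> 1 / 4"
proof -
  have "poisson_weight (x\<^sup>2) far \<le> (\<Sum>i\<in>{far..far}. poisson_weight (x\<^sup>2) i)" by simp
  also have "\<dots> \<le> exp (- (M / (32 * c2\<^sup>2)))"
    using poisson_upper_tail_le[OF x_sq_pos tail_deviation(1-3), of far] tail_deviation(4)
    by (rule order_trans)
  finally have weight: "poisson_weight (x\<^sup>2) far \<le> exp (- (M / (32 * c2\<^sup>2)))" .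
  have "D\<^sup>2 \<le> (M powr A)\<^sup>2" using D_pos D_upper by (intro power_mono) auto
  also have "\<dots> = M powr (2 * A)" by (simp add: power2_eq_square flip: powr_add)
  finally have "(u far)\<^sup>2 \<le> M powr (2 * A) * M * exp (- (M / (32 * c2\<^sup>2)))"
    unfolding u_square using weight M_pos x_pos
    by (intro mult_mono) (auto simp: poisson_weight_nonneg)
  also have "\<dots> \<le> (1 / 4)\<^sup>2" using far_weight_bound by (simp add: power2_eq_square)
  finally show ?thesis by (rule power2_le_imp_le) simp
qed

lemma sum_dist_Z_gt_if_peak_small:
  assumes "u peak \<le> 1 / 2"
  shows "C * ln M < (\<Sum>i = 1..n. (dist_Z (u i))\<^sup>2)"
proof -
  have mass: "1 / 2 \<le> (\<Sum>i = 1..n. poisson_weight (x\<^sup>2) i)"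
  proof -
    have "x\<^sup>2 + (real gap - 1) \<le> real (Suc n)" using tail_deviation(3) far_le_n by linarith
    note poisson_mass_ge[OF x_sq_pos tail_deviation(1,2) this]
    moreover have "exp (- x\<^sup>2) \<le> exp (- (c1\<^sup>2 * M\<^sup>2))" using x_sq_lower by simp
    ultimately show ?thesis using tail_deviation(4) mass_defect_bound by linarith
  qed
  have "C * ln M < r\<^sup>2 * M * (1 / 2)" using log_less_mass by simp
  also have "\<dots> \<le> D\<^sup>2 * M * (\<Sum>i = 1..n. poisson_weight (x\<^sup>2) i)"
    using mass r_pos D_lower M_pos by (intro mult_mono power_mono) auto
  also have "\<dots> = (\<Sum>i = 1..n. (u i)\<^sup>2)" by (simp add: u_square sum_distrib_left)
  also have "\<dots> = (\<Sum>i = 1..n. (dist_Z (u i))\<^sup>2)"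
  proof (rule sum.cong)
    fix i
    have "u i \<le> 1 / 2" using u_le_peak[of i] assms by linarith
    then show "(u i)\<^sup>2 = (dist_Z (u i))\<^sup>2" using dist_Z_eq_self[OF u_nonneg] by simp
  qed simp
  finally show ?thesis .
qed

lemma u_decay:
  assumes "peak \<le> i" "i < far"
  shows "x / sqrt far * u i \<le> u (Suc i) \<and> u (Suc i) \<le> u i"
proof -
  have "x / sqrt far \<le> x / sqrt (Suc i)"
    using assms x_pos by (intro divide_left_mono real_sqrt_le_mono) auto
  then have lower: "x / sqrt far * u i \<le> x / sqrt (Suc i) * u i"
    using u_nonneg by (rule mult_right_mono)
  have "sqrt (x\<^sup>2) \<le> sqrt (Suc i)" using assms peak_bounds by (intro real_sqrt_le_mono) simp
  then have "x / sqrt (Suc i) \<le> 1" using x_pos by simp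
  then have upper: "x / sqrt (Suc i) * u i \<le> u i"
    using u_nonneg x_pos by (intro mult_left_le_one_le) auto
  have "u (Suc i) = x / sqrt (Suc i) * u i" by (simp add: u_def bfun_Suc)
  with lower upper show ?thesis by simp
qed

definition run_length :: nat where "run_length = nat \<lceil>16 * C * ln M\<rceil> + 1"

lemma run_length_bounds: "16 * C * ln M < run_length" "run_length \<le> 16 * C * ln M + 2"
proof -
  have "0 \<le> 16 * C * ln M" using C_pos M_ge_1 by simp
  then have "real run_length = of_int \<lceil>16 * C * ln M\<rceil> + 1" by (simp add: run_length_def)
  then show "16 * C * ln M < run_length" "run_length \<le> 16 * C * ln M + 2"
    using ceiling_correct[of "16 * C * ln M"] by linarith+
qed

(* far / x^2 <= 1 + O(M^(-1/2)) stays bounded when raised to the power run_length = O(log M). *)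
lemma ratio_power_ge_half: "1 / 2 \<le> (x / sqrt far) ^ run_length"
proof -
  define y where "y = (M powr (3/2) + 1) / (c1\<^sup>2 * M\<^sup>2)"
  have y: "0 \<le> y" using M_pos by (simp add: y_def)
  have "real far / x\<^sup>2 \<le> (x\<^sup>2 + (M powr (3/2) + 1)) / x\<^sup>2"
    using peak_bounds gap_bounds x_sq_pos unfolding far_def by (intro divide_right_mono) auto
  also have "\<dots> = 1 + (M powr (3/2) + 1) / x\<^sup>2" using x_sq_pos by (simp add: add_divide_distrib)
  also have "\<dots> \<le> 1 + y"
    unfolding y_def using x_sq_lower x_sq_pos c1_pos M_pos by (intro add_left_mono divide_left_mono) auto
  finally have "(real far / x\<^sup>2) ^ run_length \<le> (1 + y) ^ run_length"
    using x_sq_pos by (intro power_mono) auto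
  also have "\<dots> \<le> exp y ^ run_length" using y by (intro power_mono) (auto simp: exp_ge_add_one_self)
  also have "\<dots> = exp (real run_length * y)" by (simp flip: exp_of_nat_mult)
  also have "\<dots> \<le> exp (ln 4)"
  proof -
    have "real run_length * y \<le> (16 * C * ln M + 2) * y"
      using run_length_bounds y by (intro mult_right_mono) auto
    also have "\<dots> \<le> ln 4" using run_length_ratio_bound c1_pos M_pos by (simp add: y_def field_simps)
    finally show ?thesis by (simp only: exp_le_cancel_iff)
  qed
  finally have "(real far / x\<^sup>2) ^ run_length \<le> 4" by simp
  then have "inverse 4 \<le> inverse ((real far / x\<^sup>2) ^ run_length)"
    using x_sq_pos peak_less_far by (intro le_imp_inverse_le) auto
  also have "\<dots> = ((x / sqrt far)\<^sup>2) ^ run_length"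
  proof -
    have "(x / sqrt far)\<^sup>2 = inverse (real far / x\<^sup>2)" by (simp add: power_divide)
    then show ?thesis by (simp only: power_inverse)
  qed
  also have "\<dots> = ((x / sqrt far) ^ run_length)\<^sup>2" by (metis power_mult mult.commute)
  finally have "(1 / 2)\<^sup>2 \<le> ((x / sqrt far) ^ run_length)\<^sup>2" by (simp add: power2_eq_square)
  then show ?thesis
    by (rule power2_le_imp_le) (use x_pos in simp)
qed

lemma sum_dist_Z_gt_if_peak_large:
  assumes "1 / 2 < u peak"
  shows "C * ln M < (\<Sum>i = 1..n. (dist_Z (u i))\<^sup>2)"
proof -
  have "0 < x / sqrt far" using x_pos peak_less_far by simp
  moreover have "x / sqrt far \<le> 1"
  proof -
    have "sqrt (x\<^sup>2) \<le> sqrt far" using peak_bounds peak_less_far by (intro real_sqrt_le_mono) simp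
    then show ?thesis using x_pos peak_less_far by simp
  qed
  ultimately obtain j where j: "peak < j" "j + run_length \<le> far"
    and run: "\<And>k. j \<le> k \<Longrightarrow> k < j + run_length \<Longrightarrow> 1 / 4 < u k \<and> u k \<le> 1 / 2"
    using slowly_decreasing_run_in_band[OF peak_less_far assms u_far_le _ _ ratio_power_ge_half u_decay]
    by blast
  have "{j..<j + run_length} \<subseteq> {1..n}" using j far_le_n by auto
  with run have "real run_length / 16 \<le> (\<Sum>i = 1..n. (dist_Z (u i))\<^sup>2)"
    by (rule sum_dist_Z_sq_ge_run)
  with run_length_bounds(1) show ?thesis by simp
qed

lemma sum_dist_Z_gt: "C * ln M < (\<Sum>i = 1..n. (dist_Z (D * bfun M i x))\<^sup>2)"
  using sum_dist_Z_gt_if_peak_small sum_dist_Z_gt_if_peak_large unfolding u_def by fastforce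

end

theorem theorem3p4:
  fixes c1 c2 A C r :: real
  assumes "0 < c1" "c1 < c2" "0 < A" "0 < C" "0 < r"
  shows "\<exists>N0::real. \<forall>(n::nat) (M::real) (N::real).
           N = M \<and> M \<ge> N0 \<and> {c1 * M .. c2 * M} \<subseteq> {0 .. sqrt (real n) - M} \<longrightarrow>
           (\<forall>x \<in> {c1 * M .. c2 * M}.
              \<not> (\<exists>D::real. r \<le> D \<and> D \<le> N powr A \<and>
                   (\<Sum>i = 1..n. (dist_Z (D * bfun N i x))\<^sup>2) \<le> C * ln N))"
proof -
  obtain N0 where N0: "\<And>M. N0 \<le> M \<Longrightarrow> admissible_scale c1 c2 A C r M"
    using eventually_admissible_scale[of c1 c2 r A C] assms
    by (auto simp: eventually_at_top_linorder)
  have "\<not> (\<Sum>i = 1..n. (dist_Z (D * bfun M i x))\<^sup>2) \<le> C * ln M"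
    if "N0 \<le> M" "{c1 * M .. c2 * M} \<subseteq> {0 .. sqrt (real n) - M}" "x \<in> {c1 * M .. c2 * M}"
      "r \<le> D" "D \<le> M powr A"
    for n M x D
  proof -
    have "1 \<le> M" using N0[OF that(1)] by (simp add: admissible_scale_def)
    then have "c2 * M \<le> sqrt (real n) - M" using that(2) assms(2) by auto
    then interpret large_window c1 c2 A C r M x D n
      using that N0 assms by unfold_locales auto
    show ?thesis using sum_dist_Z_gt by simp
  qed
  then show ?thesis by blast
qed

end
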